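(* Let $f\colon X\to X$ be a piecewise $\lambda$-contraction. If $\mathscr{C}=\{C_j\}_{j\in\Lambda}$ is a strongly invariant collection of pairwise disjoint open subsets of $X$, then there exist periodic orbits $\gamma_1,\dots,\gamma_r$ of $f$ contained in $\bigcup_{j\in\Lambda}C_j$ such that $\omega(f,y)\in\{\gamma_1,\dots,\gamma_r\}$ for every $y\in\bigcup_{j\in\Lambda}C_j$.
   Context: $(X,d)$ is a compact metric space whose open balls are connected, with $\mathrm{diam}(X)>0$, and $\lambda\in(0,1)$. A piecewise $\lambda$-contraction $f$: there exist $N\in\mathbb{N}$, open connected pairwise disjoint $A_1,\dots,A_N\subset X$ with dense union, and bi-Lipschitz $\varphi_i\colon X\to X$ with Lipschitz constant $\le\lambda$, $f|_{A_i}=\varphi_i|_{A_i}$. A collection $\mathscr{C}=\{C_j\}_{j\in\Lambda}$ of finitely many pairwise disjoint subsets of $X$ is strongly invariant if there is $n_0\ge1$ such that: (i) for each $A\in\mathscr{C}$ there is $A'\in\mathscr{C}$ with $f(A)\subset A'$; (ii) for each $B\in\mathscr{C}$ and $n\ge n_0$ there is $B'\in\mathscr{C}$ with $\overline{f^n(B)}\subset B'$; (iii) each $C\in\mathscr{C}$ is contained in some $A_i$. $\omega(f,y)=\bigcap_{m\ge1}\overline{\bigcup_{n\ge m}\{f^n(y)\}}$. *)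

theory Defs
  imports "HOL-Analysis.Analysis"
begin

text \<open>The ambient compact metric space X is modelled as the whole type 'a
  (assumption compact UNIV in the theorem). Open subsets of X are then open sets.\<close>

definition bi_lipschitz_le :: "real \<Rightarrow> ('a::metric_space \<Rightarrow> 'a) \<Rightarrow> bool" where
  "bi_lipschitz_le lam g \<longleftrightarrow>
     (\<forall>x y. dist (g x) (g y) \<le> lam * dist x y) \<and>
     (\<exists>c>0. \<forall>x y. c * dist x y \<le> dist (g x) (g y))"

text \<open>Strong invariance; condition (iii) refers to the pieces A_i of the
  partition witnessing that f is a piecewise contraction.\<close>
definition strongly_invariant ::
    "('a::metric_space \<Rightarrow> 'a) \<Rightarrow> nat \<Rightarrow> (nat \<Rightarrow> 'a set) \<Rightarrow> 'a set set \<Rightarrow> bool" where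
  "strongly_invariant f N A \<C> \<longleftrightarrow>
     finite \<C> \<and> disjoint \<C> \<and>
     (\<exists>n0\<ge>1.
        (\<forall>C\<in>\<C>. \<exists>C'\<in>\<C>. f ` C \<subseteq> C') \<and>
        (\<forall>B\<in>\<C>. \<forall>n\<ge>n0. \<exists>B'\<in>\<C>. closure ((f ^^ n) ` B) \<subseteq> B') \<and>
        (\<forall>C\<in>\<C>. \<exists>i<N. C \<subseteq> A i))"

definition omega_limit :: "('a::topological_space \<Rightarrow> 'a) \<Rightarrow> 'a \<Rightarrow> 'a set" where
  "omega_limit f y = (\<Inter>m\<in>{1..}. closure {(f ^^ n) y | n. n \<ge> m})"

definition periodic_orbit :: "('a \<Rightarrow> 'a) \<Rightarrow> 'a set \<Rightarrow> bool" where
  "periodic_orbit f \<gamma> \<longleftrightarrow>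
     (\<exists>p n. n \<ge> 1 \<and> (f ^^ n) p = p \<and> \<gamma> = {(f ^^ k) p | k. True})"

end

theory Submission
  imports Defs
begin

(* Each iterate f^n maps every member of the collection into a member and contracts it by
   lam^n, so two points of one member are asymptotic and have the same omega-limit set.
   By pigeonhole the orbit of y enters a member D with f^p D \<subseteq> D; for a multiple P of p
   with P \<ge> n0, strong invariance gives closure (f^P D) \<subseteq> D, so Banach's theorem yields
   a fixed point q of f^P in D. Then omega(y) = omega(f^a y) = omega(q) = orbit of q, and
   there is one omega-limit set per member. *)

lemma omega_limit_iff:
  fixes f :: "'a::metric_space \<Rightarrow> 'a"
  shows "x \<in> omega_limit f y \<longleftrightarrow> (\<forall>e>0. \<forall>m. \<exists>n\<ge>m. dist ((f ^^ n) y) x < e)"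
proof -
  have "x \<in> omega_limit f y \<longleftrightarrow> (\<forall>m\<in>{1..}. \<forall>e>0. \<exists>n\<ge>m. dist ((f ^^ n) y) x < e)"
    unfolding omega_limit_def INT_iff closure_approachable setcompr_eq_image by simp
  also have "\<dots> \<longleftrightarrow> (\<forall>e>0. \<forall>m. \<exists>n\<ge>m. dist ((f ^^ n) y) x < e)"
  proof (intro iffI allI impI ballI)
    fix e :: real and m assume "\<forall>m\<in>{1..}. \<forall>e>0. \<exists>n\<ge>m. dist ((f ^^ n) y) x < e" "e > 0"
    moreover have "Suc m \<in> {1..}"
      by simp
    ultimately obtain n where "n \<ge> Suc m" "dist ((f ^^ n) y) x < e"
      by blast
    then show "\<exists>n\<ge>m. dist ((f ^^ n) y) x < e"
      using Suc_leD by blast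
  qed simp
  finally show ?thesis .
qed

lemma omega_limit_funpow:
  fixes f :: "'a::metric_space \<Rightarrow> 'a"
  shows "omega_limit f ((f ^^ t) y) = omega_limit f y"
proof -
  have "(\<exists>n\<ge>m. dist ((f ^^ n) ((f ^^ t) y)) x < e) \<longleftrightarrow> (\<exists>n\<ge>m + t. dist ((f ^^ n) y) x < e)"
    for m x e
  proof
    assume "\<exists>n\<ge>m. dist ((f ^^ n) ((f ^^ t) y)) x < e"
    then show "\<exists>n\<ge>m + t. dist ((f ^^ n) y) x < e"
      by (metis add_le_mono1 funpow_add o_apply)
  next
    assume "\<exists>n\<ge>m + t. dist ((f ^^ n) y) x < e"
    then obtain n where "n \<ge> m + t" "dist ((f ^^ n) y) x < e" by blast
    moreover have "(f ^^ (n - t)) ((f ^^ t) y) = (f ^^ (n - t + t)) y"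
      by (simp only: funpow_add o_apply)
    then have "(f ^^ (n - t)) ((f ^^ t) y) = (f ^^ n) y"
      using \<open>n \<ge> m + t\<close> by simp
    ultimately show "\<exists>n\<ge>m. dist ((f ^^ n) ((f ^^ t) y)) x < e"
      by (metis add_le_imp_le_diff)
  qed
  then show ?thesis
    unfolding set_eq_iff omega_limit_iff by (meson le_add1 order_trans)
qed

lemma omega_limit_subset_if_asymptotic:
  fixes f :: "'a::metric_space \<Rightarrow> 'a"
  assumes "(\<lambda>n. dist ((f ^^ n) y) ((f ^^ n) z)) \<longlonglongrightarrow> 0"
  shows "omega_limit f y \<subseteq> omega_limit f z"
proof
  fix x assume x: "x \<in> omega_limit f y"
  have "\<exists>n\<ge>m. dist ((f ^^ n) z) x < e" if "e > 0" for e m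
  proof -
    obtain M where "\<forall>n\<ge>M. dist (dist ((f ^^ n) y) ((f ^^ n) z)) 0 < e / 2"
      using assms \<open>e > 0\<close> unfolding lim_sequentially by (meson half_gt_zero)
    then have M: "\<And>n. n \<ge> M \<Longrightarrow> dist ((f ^^ n) y) ((f ^^ n) z) < e / 2"
      by simp
    obtain n where n: "n \<ge> max m M" "dist ((f ^^ n) y) x < e / 2"
      using x \<open>e > 0\<close> unfolding omega_limit_iff by (meson half_gt_zero)
    then have "dist ((f ^^ n) z) x < e"
      using M[of n] by (metis dist_commute dist_triangle_half_l max.boundedE)
    then show ?thesis using n by auto
  qed
  then show "x \<in> omega_limit f z" unfolding omega_limit_iff by blast
qed

lemma omega_limit_periodic_point:
  fixes f :: "'a::metric_space \<Rightarrow> 'a"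
  assumes "P \<ge> 1" and "(f ^^ P) q = q"
  shows "omega_limit f q = {(f ^^ k) q | k. True}"
proof
  have "{(f ^^ k) q | k. True} \<subseteq> (\<lambda>k. (f ^^ k) q) ` {..<P}"
  proof
    fix z assume "z \<in> {(f ^^ k) q | k. True}"
    then obtain k where "z = (f ^^ k) q"
      by blast
    then have "z = (f ^^ (k mod P)) q"
      by (simp add: funpow_mod_eq[OF assms(2)])
    moreover have "k mod P \<in> {..<P}"
      using assms(1) by simp
    ultimately show "z \<in> (\<lambda>k. (f ^^ k) q) ` {..<P}"
      by (rule image_eqI)
  qed
  then have closed: "closed {(f ^^ k) q | k. True}"
    by (meson finite_imageI finite_lessThan finite_subset finite_imp_closed)
  have "omega_limit f q \<subseteq> closure {(f ^^ n) q | n. n \<ge> 1}"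
    unfolding omega_limit_def by (rule INT_lower) simp
  also have "\<dots> \<subseteq> closure {(f ^^ k) q | k. True}"
    by (rule closure_mono) blast
  also have "\<dots> = {(f ^^ k) q | k. True}"
    using closed by (rule closure_closed)
  finally show "omega_limit f q \<subseteq> {(f ^^ k) q | k. True}" .
next
  show "{(f ^^ k) q | k. True} \<subseteq> omega_limit f q"
  proof clarify
    fix k
    have "\<exists>n\<ge>m. dist ((f ^^ n) q) ((f ^^ k) q) < e" if "e > 0" for e m
    proof (intro exI conjI)
      have "m * 1 \<le> m * P"
        using assms(1) by (rule mult_le_mono2)
      then show "m \<le> m * P + k"
        by linarith
      have "(f ^^ (m * P + k)) q = (f ^^ k) q"
        using funpow_mod_eq[OF assms(2), of "m * P + k"] funpow_mod_eq[OF assms(2), of k] by simp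
      then show "dist ((f ^^ (m * P + k)) q) ((f ^^ k) q) < e"
        using that by simp
    qed
    then show "(f ^^ k) q \<in> omega_limit f q"
      unfolding omega_limit_iff by blast
  qed
qed

lemma contraction_has_fixpoint:
  fixes g :: "'a::metric_space \<Rightarrow> 'a"
  assumes "complete (UNIV :: 'a set)" and "c-lipschitz_on D g" and "c < 1"
    and "closure (g ` D) \<subseteq> D" and "D \<noteq> {}"
  shows "\<exists>x\<in>D. g x = x"
proof -
  define S where "S = closure (g ` D)"
  have "complete S"
    unfolding S_def using assms(1) by (rule complete_closed_subset[OF closed_closure subset_UNIV])
  moreover have "S \<noteq> {}"
    using assms(5) by (simp add: S_def)
  moreover have "g ` S \<subseteq> S"
    using assms(4) closure_subset unfolding S_def by blast
  moreover have "c-lipschitz_on S g"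
    using assms(2,4) S_def lipschitz_on_subset by blast
  ultimately obtain x where "x \<in> S" "g x = x"
    using Banach_fix[of S c g] assms(3) lipschitz_on_nonneg lipschitz_onD by metis
  then show ?thesis
    using assms(4) S_def by blast
qed

lemma funpow_image_subset: "g ` D \<subseteq> D \<Longrightarrow> (g ^^ n) ` D \<subseteq> D"
  by (induction n) (auto simp: image_subset_iff)

locale contracting_collection =
  fixes f :: "'a::metric_space \<Rightarrow> 'a" and lam :: real and \<C> :: "'a set set" and n0 :: nat
  assumes complete: "complete (UNIV :: 'a set)"
    and lam_less_1: "lam < 1"
    and lipschitz: "C \<in> \<C> \<Longrightarrow> lam-lipschitz_on C f"
    and finite_collection: "finite \<C>"
    and disjoint_collection: "disjoint \<C>"
    and maps_into: "C \<in> \<C> \<Longrightarrow> \<exists>C'\<in>\<C>. f ` C \<subseteq> C'"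
    and closure_maps_into: "B \<in> \<C> \<Longrightarrow> n \<ge> n0 \<Longrightarrow> \<exists>B'\<in>\<C>. closure ((f ^^ n) ` B) \<subseteq> B'"
begin

lemma member_eqI: "C \<in> \<C> \<Longrightarrow> C' \<in> \<C> \<Longrightarrow> x \<in> C \<Longrightarrow> x \<in> C' \<Longrightarrow> C = C'"
  using disjoint_collection by (meson disjnt_iff pairwiseD)

lemma funpow_maps_into: "C \<in> \<C> \<Longrightarrow> \<exists>C'\<in>\<C>. (f ^^ n) ` C \<subseteq> C'"
proof (induction n)
  case (Suc n)
  then obtain C' C'' where "C' \<in> \<C>" "(f ^^ n) ` C \<subseteq> C'" "C'' \<in> \<C>" "f ` C' \<subseteq> C''"
    using maps_into by meson
  then show ?case
    by (auto simp: image_comp[symmetric])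
qed auto

lemma funpow_lipschitz: "C \<in> \<C> \<Longrightarrow> (lam ^ n)-lipschitz_on C (f ^^ n)"
proof (induction n)
  case 0
  then show ?case by (simp add: lipschitz_on_id)
next
  case (Suc n)
  then obtain C' where "C' \<in> \<C>" "(f ^^ n) ` C \<subseteq> C'"
    using funpow_maps_into by blast
  then have "lam-lipschitz_on ((f ^^ n) ` C) f"
    using lipschitz lipschitz_on_subset by blast
  then show ?case
    using lipschitz_on_compose[OF Suc.IH[OF Suc.prems]] by (simp add: mult.commute)
qed

lemma omega_limit_eq_in_member:
  assumes "C \<in> \<C>" "y \<in> C" "z \<in> C"
  shows "omega_limit f y = omega_limit f z"
proof -
  have "\<forall>n. norm (dist ((f ^^ n) y) ((f ^^ n) z)) \<le> lam ^ n * dist y z"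
    using lipschitz_onD[OF funpow_lipschitz[OF assms(1)] assms(2,3)] by simp
  then have "eventually (\<lambda>n. norm (dist ((f ^^ n) y) ((f ^^ n) z)) \<le> lam ^ n * dist y z) sequentially"
    by (rule always_eventually)
  moreover have "0 \<le> lam"
    using lipschitz[OF assms(1)] by (rule lipschitz_on_nonneg)
  then have "(\<lambda>n. lam ^ n * dist y z) \<longlonglongrightarrow> 0"
    using lam_less_1 by (intro tendsto_mult_left_zero LIMSEQ_power_zero) simp
  ultimately have "(\<lambda>n. dist ((f ^^ n) y) ((f ^^ n) z)) \<longlonglongrightarrow> 0"
    by (rule Lim_null_comparison)
  then show ?thesis
    using omega_limit_subset_if_asymptotic[of f y z] omega_limit_subset_if_asymptotic[of f z y]
    by (simp add: dist_commute)
qed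

lemma orbit_enters_invariant_member:
  assumes "y \<in> \<Union>\<C>"
  obtains D a p where "D \<in> \<C>" "(f ^^ a) y \<in> D" "p \<ge> 1" "(f ^^ p) ` D \<subseteq> D"
proof -
  have "\<forall>n\<in>UNIV. \<exists>C\<in>\<C>. (f ^^ n) y \<in> C"
    using assms funpow_maps_into by blast
  from pigeonhole_infinite_rel[OF infinite_UNIV_nat finite_collection this]
  obtain D where D: "D \<in> \<C>" and "infinite {n \<in> UNIV. (f ^^ n) y \<in> D}"
    by blast
  then have returns: "\<forall>m. \<exists>n>m. (f ^^ n) y \<in> D"
    unfolding infinite_nat_iff_unbounded by simp
  then obtain a where a: "(f ^^ a) y \<in> D"
    by blast
  obtain b where b: "a < b" "(f ^^ b) y \<in> D"
    using returns by blast
  obtain D' where D': "D' \<in> \<C>" "(f ^^ (b - a)) ` D \<subseteq> D'"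
    using funpow_maps_into[OF D] by blast
  have "(f ^^ (b - a)) ((f ^^ a) y) = (f ^^ (b - a + a)) y"
    by (simp only: funpow_add o_apply)
  also have "\<dots> = (f ^^ b) y"
    using b(1) by simp
  finally have eq: "(f ^^ (b - a)) ((f ^^ a) y) = (f ^^ b) y" .
  have "(f ^^ (b - a)) ((f ^^ a) y) \<in> D'"
    using D'(2) a by blast
  with eq have "(f ^^ b) y \<in> D'"
    by simp
  then have "D' = D"
    using member_eqI[OF D'(1) D _ b(2)] by blast
  then show ?thesis
    using that[OF D a, of "b - a"] D' b(1) by simp
qed

lemma periodic_point_in_member:
  assumes "D \<in> \<C>" "D \<noteq> {}" "p \<ge> 1" "(f ^^ p) ` D \<subseteq> D"
  obtains q P where "q \<in> D" "P \<ge> 1" "(f ^^ P) q = q"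
proof -
  \<comment> \<open>a multiple of p, so that D is f^P-invariant, and at least n0, so that strong invariance applies\<close>
  define P where "P = Suc n0 * p"
  have "Suc n0 * 1 \<le> P"
    unfolding P_def using assms(3) by (rule mult_le_mono2)
  then have P: "P \<ge> 1" "P \<ge> n0"
    by simp_all
  have into: "(f ^^ P) ` D \<subseteq> D"
    using funpow_image_subset[OF assms(4), of "Suc n0"] by (simp add: P_def funpow_mult mult.commute)
  obtain B where B: "B \<in> \<C>" "closure ((f ^^ P) ` D) \<subseteq> B"
    using closure_maps_into[OF assms(1) P(2)] by blast
  obtain x where "x \<in> D"
    using assms(2) by blast
  then have "B = D"
    using member_eqI[OF B(1) assms(1)] B(2) into closure_subset by blast
  moreover have "0 \<le> lam"
    using lipschitz[OF assms(1)] by (rule lipschitz_on_nonneg)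
  then have "lam ^ P < 1"
    using P(1) lam_less_1 by (simp add: power_less_one_iff)
  ultimately obtain q where "q \<in> D" "(f ^^ P) q = q"
    using contraction_has_fixpoint[OF complete funpow_lipschitz[OF assms(1)]] assms(2) B(2) by blast
  then show ?thesis
    using that P(1) by blast
qed

lemma omega_limit_eq_periodic_orbit:
  assumes "y \<in> \<Union>\<C>"
  obtains q P where "q \<in> \<Union>\<C>" "P \<ge> 1" "(f ^^ P) q = q"
    "omega_limit f y = {(f ^^ k) q | k. True}"
proof -
  obtain D a p where D: "D \<in> \<C>" "(f ^^ a) y \<in> D" "p \<ge> 1" "(f ^^ p) ` D \<subseteq> D"
    using orbit_enters_invariant_member[OF assms] .
  then obtain q P where q: "q \<in> D" "P \<ge> 1" "(f ^^ P) q = q"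
    using periodic_point_in_member by blast
  have "omega_limit f y = omega_limit f ((f ^^ a) y)"
    by (rule omega_limit_funpow[symmetric])
  also have "\<dots> = omega_limit f q"
    using D(1,2) q(1) by (rule omega_limit_eq_in_member)
  also have "\<dots> = {(f ^^ k) q | k. True}"
    using q(2,3) by (rule omega_limit_periodic_point)
  finally show ?thesis
    using that D(1) q by blast
qed

lemma orbit_subset_Union: "q \<in> \<Union>\<C> \<Longrightarrow> {(f ^^ k) q | k. True} \<subseteq> \<Union>\<C>"
  using funpow_maps_into by blast

theorem omega_limits_are_finitely_many_periodic_orbits:
  "\<exists>\<Gamma>. finite \<Gamma> \<and> (\<forall>\<gamma>\<in>\<Gamma>. periodic_orbit f \<gamma> \<and> \<gamma> \<subseteq> \<Union>\<C>) \<and>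
     (\<forall>y\<in>\<Union>\<C>. omega_limit f y \<in> \<Gamma>)"
proof (intro exI conjI)
  have "finite (omega_limit f ` C)" if "C \<in> \<C>" for C
  proof (cases "C = {}")
    case False
    then obtain y where "y \<in> C" by blast
    then have "omega_limit f ` C \<subseteq> {omega_limit f y}"
      using omega_limit_eq_in_member[OF that] by blast
    then show ?thesis
      by (rule finite_subset) simp
  qed simp
  then show "finite (omega_limit f ` \<Union>\<C>)"
    using finite_collection by (simp add: image_Union)
  show "\<forall>\<gamma>\<in>omega_limit f ` \<Union>\<C>. periodic_orbit f \<gamma> \<and> \<gamma> \<subseteq> \<Union>\<C>"
  proof
    fix \<gamma> assume "\<gamma> \<in> omega_limit f ` \<Union>\<C>"
    then obtain y where y: "y \<in> \<Union>\<C>" and \<gamma>: "\<gamma> = omega_limit f y"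
      by blast
    obtain q P where "q \<in> \<Union>\<C>" "P \<ge> 1" "(f ^^ P) q = q" "omega_limit f y = {(f ^^ k) q | k. True}"
      by (rule omega_limit_eq_periodic_orbit[OF y])
    then show "periodic_orbit f \<gamma> \<and> \<gamma> \<subseteq> \<Union>\<C>"
      unfolding \<gamma> periodic_orbit_def using orbit_subset_Union by blast
  qed
qed simp

end

theorem lemma3p5:
  fixes f :: "'a::metric_space \<Rightarrow> 'a" and lam :: real
    and N :: nat and A :: "nat \<Rightarrow> 'a set" and \<phi> :: "nat \<Rightarrow> 'a \<Rightarrow> 'a"
    and \<C> :: "'a set set"
  assumes X_compact: "compact (UNIV :: 'a set)"
    and balls_connected: "\<And>(x::'a) r. connected (ball x r)"
    and diam_pos: "diameter (UNIV :: 'a set) > 0"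
    and lam: "0 < lam" "lam < 1"
    and A_open: "\<And>i. i < N \<Longrightarrow> open (A i)"
    and A_conn: "\<And>i. i < N \<Longrightarrow> connected (A i)"
    and A_disj: "\<And>i j. i < N \<Longrightarrow> j < N \<Longrightarrow> i \<noteq> j \<Longrightarrow> A i \<inter> A j = {}"
    and A_dense: "closure (\<Union>i<N. A i) = UNIV"
    and \<phi>_lip: "\<And>i. i < N \<Longrightarrow> bi_lipschitz_le lam (\<phi> i)"
    and f_piece: "\<And>i x. i < N \<Longrightarrow> x \<in> A i \<Longrightarrow> f x = \<phi> i x"
    and C_open: "\<And>C. C \<in> \<C> \<Longrightarrow> open C"
    and C_inv: "strongly_invariant f N A \<C>"
  shows "\<exists>\<Gamma>. finite \<Gamma> \<and> (\<forall>\<gamma>\<in>\<Gamma>. periodic_orbit f \<gamma> \<and> \<gamma> \<subseteq> \<Union>\<C>) \<and>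
           (\<forall>y\<in>\<Union>\<C>. omega_limit f y \<in> \<Gamma>)"
proof -
  obtain n0 where fin: "finite \<C>" and disj: "disjoint \<C>"
    and maps: "\<forall>C\<in>\<C>. \<exists>C'\<in>\<C>. f ` C \<subseteq> C'"
    and closure_maps: "\<forall>B\<in>\<C>. \<forall>n\<ge>n0. \<exists>B'\<in>\<C>. closure ((f ^^ n) ` B) \<subseteq> B'"
    and in_piece: "\<forall>C\<in>\<C>. \<exists>i<N. C \<subseteq> A i"
    using C_inv unfolding strongly_invariant_def by (elim conjE exE) blast
  have lipschitz: "lam-lipschitz_on C f" if C: "C \<in> \<C>" for C
  proof (rule lipschitz_onI)
    obtain i where i: "i < N" "C \<subseteq> A i"
      using bspec[OF in_piece C] by blast
    fix x y assume "x \<in> C" "y \<in> C"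
    then have "f x = \<phi> i x" "f y = \<phi> i y"
      using f_piece i by auto
    then show "dist (f x) (f y) \<le> lam * dist x y"
      using \<phi>_lip[OF i(1)] unfolding bi_lipschitz_le_def by simp
  qed (use lam(1) in simp)
  interpret contracting_collection f lam \<C> n0
    by unfold_locales
      (use compact_imp_complete[OF X_compact] lam(2) lipschitz fin disj maps closure_maps in blast)+
  show ?thesis
    by (rule omega_limits_are_finitely_many_periodic_orbits)
qed

end
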